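(* Let $\{X_i\}_{i\ge1}$ be i.i.d. real random variables with a unimodal density $f$ satisfying $\sup_{x\in\mathbb R}f(x)\le C_0$ for some constant $C_0>0$, and let $f_n$ denote the density of $\sum_{i=1}^nX_i$. Then there is a constant $C>0$ such that $\sup_{n\ge1}\sup_{x\in\mathbb R}f_n(x)\le C$. Moreover, if $N$ is a $\{1,2,\dots\}$-valued random variable independent of $\{X_i\}$ and $f_N$ denotes the density of $\sum_{i=1}^NX_i$, then $\sup_{x\in\mathbb R}f_N(x)\le C$. *)

theory Defs
  imports "HOL-Probability.Probability"
begin

definition unimodal :: "(real \<Rightarrow> real) \<Rightarrow> bool" where
  "unimodal f \<longleftrightarrow> (\<exists>m. mono_on {..m} f \<and> antimono_on {m..} f)"

end

theory Submission imports Defs begin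

text \<open>If \<open>X\<close> has density \<open>f\<close> and \<open>Y\<close> is independent of \<open>X\<close>, then \<open>X + Y\<close> has
the density \<open>x \<mapsto> E f(x - Y)\<close>, which is bounded by \<open>sup f\<close>. Writing a partial sum,
with deterministic or independent random length \<open>N \<ge> 1\<close>, as \<open>X\<^sub>0\<close> plus the remaining
terms therefore bounds its density by \<open>C\<^sub>0\<close>.\<close>

lemma convolution_density_left:
  fixes f :: "real \<Rightarrow> ennreal"
  assumes [measurable]: "f \<in> borel_measurable borel"
    and fin: "finite_measure (density lborel f)" "finite_measure N"
    and sN[measurable_cong, simp]: "sets N = sets borel"
  shows "density lborel f \<star> N = density lborel (\<lambda>x. \<integral>\<^sup>+y. f (x - y) \<partial>N)"
    (is "?l = ?r")
proof (intro measure_eqI)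
  interpret N: finite_measure N by fact
  interpret P: pair_sigma_finite lborel N
    by (intro pair_sigma_finite.intro lborel.sigma_finite_measure_axioms N.sigma_finite_measure)
  fix A assume "A \<in> sets ?l"
  then have [measurable]: "A \<in> sets borel"
    by simp
  have "emeasure ?l A = (\<integral>\<^sup>+x. \<integral>\<^sup>+y. indicator A (x + y) \<partial>N \<partial>density lborel f)"
    using fin by (intro convolution_emeasure') auto
  also have "\<dots> = (\<integral>\<^sup>+x. (\<integral>\<^sup>+y. f x * indicator A (x + y) \<partial>N) \<partial>lborel)"
    by (subst nn_integral_density) (auto intro!: nn_integral_cong nn_integral_cmult[symmetric])
  also have "\<dots> = (\<integral>\<^sup>+y. (\<integral>\<^sup>+x. f x * indicator A (x + y) \<partial>lborel) \<partial>N)"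
    by (intro P.Fubini'[symmetric]) measurable
  also have "\<dots> = (\<integral>\<^sup>+y. (\<integral>\<^sup>+x. f (x - y) * indicator A x \<partial>lborel) \<partial>N)"
  proof (rule nn_integral_cong)
    fix y
    show "(\<integral>\<^sup>+x. f x * indicator A (x + y) \<partial>lborel) = (\<integral>\<^sup>+x. f (x - y) * indicator A x \<partial>lborel)"
      by (subst nn_integral_real_affine[where c=1 and t="-y"])
         (auto simp add: one_ennreal_def[symmetric])
  qed
  also have "\<dots> = (\<integral>\<^sup>+x. (\<integral>\<^sup>+y. f (x - y) * indicator A x \<partial>N) \<partial>lborel)"
    by (intro P.Fubini') measurable
  also have "\<dots> = (\<integral>\<^sup>+x. (\<integral>\<^sup>+y. f (x - y) \<partial>N) * indicator A x \<partial>lborel)"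
    by (intro nn_integral_cong nn_integral_multc) auto
  also have "\<dots> = emeasure ?r A"
    by (subst emeasure_density) (auto intro!: nn_integral_cong simp: mult.commute)
  finally show "emeasure ?l A = emeasure ?r A" .
qed simp

lemma (in prob_space) distributed_add_indep:
  fixes f :: "real \<Rightarrow> ennreal"
  assumes indep: "indep_var borel X borel Y"
    and X: "distributed M lborel X f"
    and Y[measurable]: "random_variable borel Y"
  shows "distributed M lborel (\<lambda>\<omega>. X \<omega> + Y \<omega>) (\<lambda>x. \<integral>\<^sup>+y. f (x - y) \<partial>distr M borel Y)"
  unfolding distributed_def
proof safe
  have [measurable]: "f \<in> borel_measurable borel"
    using distributed_borel_measurable[OF X] by simp
  have [measurable]: "random_variable borel X"
    using distributed_measurable[OF X] by simp
  interpret PY: prob_space "distr M borel Y"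
    by (rule prob_space_distr) simp
  show "(\<lambda>x. \<integral>\<^sup>+y. f (x - y) \<partial>distr M borel Y) \<in> borel_measurable lborel"
    by measurable
  have "distr M borel (\<lambda>\<omega>. X \<omega> + Y \<omega>) = (distr M borel X \<star> distr M borel Y)"
    by (intro sum_indep_random_variable) (auto simp: indep)
  also have "\<dots> = (density lborel f \<star> distr M borel Y)"
    using distributed_distr_eq_density[OF X] by (simp cong: distr_cong)
  also have "\<dots> = density lborel (\<lambda>x. \<integral>\<^sup>+y. f (x - y) \<partial>distr M borel Y)"
    using distributed_finite_measure_density[OF X] PY.finite_measure_axioms
    by (intro convolution_density_left) auto
  finally show "distr M lborel (\<lambda>\<omega>. X \<omega> + Y \<omega>) = density lborel (\<lambda>x. \<integral>\<^sup>+y. f (x - y) \<partial>distr M borel Y)"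
    by (simp cong: distr_cong)
  show "random_variable lborel (\<lambda>\<omega>. X \<omega> + Y \<omega>)"
    by simp
qed

lemma (in prob_space) distributed_add_indep_bounded:
  fixes f :: "real \<Rightarrow> real"
  assumes indep: "indep_var borel X borel Y"
    and X: "distributed M lborel X (\<lambda>x. ennreal (f x))"
    and Y[measurable]: "random_variable borel Y"
    and nonneg: "\<And>x. 0 \<le> f x" and bound: "\<And>x. f x \<le> C"
  shows "\<exists>g. distributed M lborel (\<lambda>\<omega>. X \<omega> + Y \<omega>) (\<lambda>x. ennreal (g x)) \<and> (\<forall>x. 0 \<le> g x \<and> g x \<le> C)"
proof -
  define h where "h x = (\<integral>\<^sup>+y. ennreal (f (x - y)) \<partial>distr M borel Y)" for x
  interpret PY: prob_space "distr M borel Y"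
    by (rule prob_space_distr) simp
  have h_le: "h x \<le> ennreal C" for x
  proof -
    have "h x \<le> (\<integral>\<^sup>+y. ennreal C \<partial>distr M borel Y)"
      unfolding h_def by (intro nn_integral_mono) (simp add: bound ennreal_leI)
    also have "\<dots> = ennreal C"
      using PY.emeasure_space_1 by simp
    finally show ?thesis .
  qed
  have "0 \<le> C"
    using nonneg[of 0] bound[of 0] by simp
  define g where "g x = enn2real (h x)" for x
  have "h = (\<lambda>x. ennreal (g x))"
    using h_le neq_top_trans[OF ennreal_neq_top] by (auto simp: g_def fun_eq_iff ennreal_enn2real_if)
  moreover have "0 \<le> g x \<and> g x \<le> C" for x
    using h_le[of x] \<open>0 \<le> C\<close> by (simp add: g_def enn2real_leI)
  ultimately show ?thesis
    using distributed_add_indep[OF indep X Y] unfolding h_def by (simp only:) blast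
qed

lemma distributed_cong_random_variable:
  assumes "\<And>\<omega>. \<omega> \<in> space M \<Longrightarrow> X \<omega> = Y \<omega>" "distributed M N X f"
  shows "distributed M N Y f"
  using assms unfolding distributed_def
  by (auto simp: measurable_cong[of M X Y, symmetric] cong: distr_cong)

text \<open>The length \<open>N\<close> enters the independent family as the real variable indexed by
\<open>None\<close>; it is read back through \<open>nat \<lfloor>_\<rfloor>\<close>.\<close>

lemma (in prob_space) indep_var_first_random_sum_tail:
  fixes X :: "nat \<Rightarrow> 'a \<Rightarrow> real" and N :: "'a \<Rightarrow> nat"
  assumes indep: "indep_vars (\<lambda>_. borel)
      (\<lambda>j \<omega>. case j of None \<Rightarrow> real (N \<omega>) | Some i \<Rightarrow> X i \<omega>) UNIV"
  shows "indep_var borel (X 0) borel (\<lambda>\<omega>. \<Sum>i<N \<omega> - 1. X (Suc i) \<omega>)"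
proof -
  define Z where "Z j \<omega> = (case j of None \<Rightarrow> real (N \<omega>) | Some i \<Rightarrow> X i \<omega>)" for j \<omega>
  define A :: "nat option set" where "A = {Some 0}"
  define B :: "nat option set" where "B = - {Some 0}"
  define F where "F x = (\<Sum>i<nat \<lfloor>x None\<rfloor> - 1. x (Some (Suc i)))" for x :: "nat option \<Rightarrow> real"
  have "None \<in> B" "\<And>i. Some (Suc i) \<in> B"
    by (simp_all add: B_def)
  then have F_measurable: "F \<in> borel_measurable (PiM B (\<lambda>_. borel))"
    unfolding F_def by measurable
  have "indep_var (PiM A (\<lambda>_. borel)) (\<lambda>\<omega>. restrict (\<lambda>i. Z i \<omega>) A)
                  (PiM B (\<lambda>_. borel)) (\<lambda>\<omega>. restrict (\<lambda>i. Z i \<omega>) B)"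
    by (rule indep_var_restrict) (use indep in \<open>auto simp: Z_def A_def B_def\<close>)
  then have "indep_var borel ((\<lambda>x. x (Some 0)) \<circ> (\<lambda>\<omega>. restrict (\<lambda>i. Z i \<omega>) A))
                       borel (F \<circ> (\<lambda>\<omega>. restrict (\<lambda>i. Z i \<omega>) B))"
    by (rule indep_var_compose) (auto simp: A_def intro!: F_measurable measurable_component_singleton)
  also have "(\<lambda>x. x (Some 0)) \<circ> (\<lambda>\<omega>. restrict (\<lambda>i. Z i \<omega>) A) = X 0"
    by (auto simp: A_def Z_def)
  also have "F \<circ> (\<lambda>\<omega>. restrict (\<lambda>i. Z i \<omega>) B) = (\<lambda>\<omega>. \<Sum>i<N \<omega> - 1. X (Suc i) \<omega>)"
    by (auto simp: B_def Z_def F_def fun_eq_iff)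
  finally show ?thesis .
qed

lemma (in prob_space) distributed_partial_sum_bounded:
  fixes X :: "nat \<Rightarrow> 'a \<Rightarrow> real" and f :: "real \<Rightarrow> real"
  assumes indep: "indep_vars (\<lambda>_. borel) X UNIV"
    and dens: "\<And>i. distributed M lborel (X i) (\<lambda>x. ennreal (f x))"
    and nonneg: "\<And>x. 0 \<le> f x" and bound: "\<And>x. f x \<le> C"
    and "n \<ge> 1"
  shows "\<exists>g. distributed M lborel (\<lambda>\<omega>. \<Sum>i<n. X i \<omega>) (\<lambda>x. ennreal (g x)) \<and> (\<forall>x. 0 \<le> g x \<and> g x \<le> C)"
proof -
  have [measurable]: "random_variable borel (X i)" for i
    using distributed_measurable[OF dens] by simp
  obtain m where n: "n = Suc m"
    using \<open>n \<ge> 1\<close> by (cases n) auto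
  have "indep_var borel (X m) borel (\<lambda>\<omega>. \<Sum>i<m. X i \<omega>)"
    by (rule indep_vars_sum) (auto intro: indep_vars_subset[OF indep])
  from distributed_add_indep_bounded[OF this dens _ nonneg bound]
  show ?thesis
    unfolding n by (auto simp: add.commute)
qed

lemma (in prob_space) distributed_random_sum_bounded:
  fixes X :: "nat \<Rightarrow> 'a \<Rightarrow> real" and f :: "real \<Rightarrow> real" and N :: "'a \<Rightarrow> nat"
  assumes indep: "indep_vars (\<lambda>_. borel)
      (\<lambda>j \<omega>. case j of None \<Rightarrow> real (N \<omega>) | Some i \<Rightarrow> X i \<omega>) UNIV"
    and dens: "\<And>i. distributed M lborel (X i) (\<lambda>x. ennreal (f x))"
    and nonneg: "\<And>x. 0 \<le> f x" and bound: "\<And>x. f x \<le> C"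
    and N_pos: "\<And>\<omega>. \<omega> \<in> space M \<Longrightarrow> N \<omega> \<ge> 1"
  shows "\<exists>g. distributed M lborel (\<lambda>\<omega>. \<Sum>i<N \<omega>. X i \<omega>) (\<lambda>x. ennreal (g x)) \<and> (\<forall>x. 0 \<le> g x \<and> g x \<le> C)"
proof -
  have tail: "indep_var borel (X 0) borel (\<lambda>\<omega>. \<Sum>i<N \<omega> - 1. X (Suc i) \<omega>)"
    using indep by (rule indep_var_first_random_sum_tail)
  obtain g where g: "distributed M lborel (\<lambda>\<omega>. X 0 \<omega> + (\<Sum>i<N \<omega> - 1. X (Suc i) \<omega>)) (\<lambda>x. ennreal (g x))"
      "\<forall>x. 0 \<le> g x \<and> g x \<le> C"
    using distributed_add_indep_bounded[OF tail dens indep_var_rv2[OF tail] nonneg bound] by auto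
  have "X 0 \<omega> + (\<Sum>i<N \<omega> - 1. X (Suc i) \<omega>) = (\<Sum>i<N \<omega>. X i \<omega>)" if \<omega>: "\<omega> \<in> space M" for \<omega>
  proof -
    obtain k where "N \<omega> = Suc k"
      using N_pos[OF \<omega>] by (cases "N \<omega>") auto
    then show ?thesis
      by (simp only: sum.lessThan_Suc_shift diff_Suc_1)
  qed
  then have "distributed M lborel (\<lambda>\<omega>. \<Sum>i<N \<omega>. X i \<omega>) (\<lambda>x. ennreal (g x))"
    by (rule distributed_cong_random_variable[OF _ g(1)])
  with g(2) show ?thesis
    by blast
qed

theorem lemmaA3:
  fixes M :: "'a measure" and X :: "nat \<Rightarrow> 'a \<Rightarrow> real"
    and f :: "real \<Rightarrow> real" and C\<^sub>0 :: real
  assumes "prob_space M"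
    and indep: "prob_space.indep_vars M (\<lambda>_. borel) X UNIV"
    and dens: "\<And>i. distributed M lborel (X i) (\<lambda>x. ennreal (f x))"
    and nonneg: "\<And>x. 0 \<le> f x"
    and "unimodal f"
    and "C\<^sub>0 > 0" and bound: "\<And>x. f x \<le> C\<^sub>0"
  shows "\<exists>C>0.
     (\<forall>n\<ge>1. \<exists>g. distributed M lborel (\<lambda>\<omega>. \<Sum>i<n. X i \<omega>) (\<lambda>x. ennreal (g x))
                  \<and> (\<forall>x. 0 \<le> g x \<and> g x \<le> C))
   \<and> (\<forall>N :: 'a \<Rightarrow> nat.
        N \<in> measurable M (count_space UNIV)
        \<longrightarrow> (\<forall>\<omega>\<in>space M. N \<omega> \<ge> 1)
        \<longrightarrow> prob_space.indep_vars M (\<lambda>_. borel)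
              (\<lambda>j \<omega>. case j of None \<Rightarrow> real (N \<omega>) | Some i \<Rightarrow> X i \<omega>) UNIV
        \<longrightarrow> (\<exists>g. distributed M lborel (\<lambda>\<omega>. \<Sum>i<N \<omega>. X i \<omega>) (\<lambda>x. ennreal (g x))
                  \<and> (\<forall>x. 0 \<le> g x \<and> g x \<le> C)))"
proof (intro exI[of _ C\<^sub>0] conjI allI impI)
  interpret prob_space M by fact
  show "C\<^sub>0 > 0" by fact
  show "\<exists>g. distributed M lborel (\<lambda>\<omega>. \<Sum>i<n. X i \<omega>) (\<lambda>x. ennreal (g x)) \<and> (\<forall>x. 0 \<le> g x \<and> g x \<le> C\<^sub>0)"
    if "n \<ge> 1" for n
    using distributed_partial_sum_bounded[OF indep dens nonneg bound that] .
  show "\<exists>g. distributed M lborel (\<lambda>\<omega>. \<Sum>i<N \<omega>. X i \<omega>) (\<lambda>x. ennreal (g x)) \<and> (\<forall>x. 0 \<le> g x \<and> g x \<le> C\<^sub>0)"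
    if "\<forall>\<omega>\<in>space M. N \<omega> \<ge> 1"
      and "indep_vars (\<lambda>_. borel) (\<lambda>j \<omega>. case j of None \<Rightarrow> real (N \<omega>) | Some i \<Rightarrow> X i \<omega>) UNIV"
    for N :: "'a \<Rightarrow> nat"
    using distributed_random_sum_bounded[OF that(2) dens nonneg bound] that(1) by blast
qed

end
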